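(* Let $\mathcal H$ be a real Hilbert space, $T:\mathcal H\rightrightarrows\mathcal H$ maximal monotone, $a,b\ge0$, $\psi(\rho,z):=a\rho^2+b\rho+\big(\rho\|J_{\rho T}(z)-z\|\big)^2$ for $\rho>0$, and let $z\in\mathcal H$ with $0\notin T(z)$. Then: (a) $\psi(\rho,z)>0$ for every $\rho>0$; (b) $\rho\mapsto\psi(\rho,z)$ is strictly increasing and continuous on $(0,\infty)$, with $\psi(\rho,z)\to0$ as $\rho\to0^+$ and $\psi(\rho,z)\to\infty$ as $\rho\to\infty$; (c) for any $0<\theta_-<\theta_+<\infty$, the set of $\rho>0$ with $\theta_-\le\psi(\rho,z)\le\theta_+$ is a closed interval $[\rho_-,\rho_+]$ where $\psi(\rho_-,z)=\theta_-$ and $\psi(\rho_+,z)=\theta_+$, and $\rho_+/\rho_-\ge(\theta_+/\theta_-)^{1/4}$.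
   Context: $J_{\rho T}:=(\rho T+I)^{-1}$ denotes the resolvent of $\rho T$. *)

theory Defs
  imports "HOL-Analysis.Analysis"
begin

definition monotone_op :: "('a::real_inner \<Rightarrow> 'a set) \<Rightarrow> bool" where
  "monotone_op T \<longleftrightarrow>
     (\<forall>x y u v. u \<in> T x \<longrightarrow> v \<in> T y \<longrightarrow> inner (x - y) (u - v) \<ge> 0)"

definition maximal_monotone :: "('a::real_inner \<Rightarrow> 'a set) \<Rightarrow> bool" where
  "maximal_monotone T \<longleftrightarrow> monotone_op T \<and>
     (\<forall>x u. (\<forall>y v. v \<in> T y \<longrightarrow> inner (x - y) (u - v) \<ge> 0) \<longrightarrow> u \<in> T x)"

text \<open>Resolvent J_{\<rho>T} = (\<rho>T + I)^{-1}: J_{\<rho>T}(z) is the (unique, by Minty) x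
  with z \<in> x + \<rho> T x.\<close>
definition resolvent :: "real \<Rightarrow> ('a::real_inner \<Rightarrow> 'a set) \<Rightarrow> 'a \<Rightarrow> 'a" where
  "resolvent \<rho> T z = (THE x. \<exists>u \<in> T x. z = x + \<rho> *\<^sub>R u)"

definition psi :: "real \<Rightarrow> real \<Rightarrow> ('a::real_inner \<Rightarrow> 'a set) \<Rightarrow> real \<Rightarrow> 'a \<Rightarrow> real" where
  "psi a b T \<rho> z = a * \<rho>\<^sup>2 + b * \<rho> + (\<rho> * norm (resolvent \<rho> T z - z))\<^sup>2"

end

theory Submission
  imports Defs
begin

text \<open>
  Write \<open>\<phi>(\<rho>) = \<parallel>J\<^sub>\<rho>\<^sub>T z - z\<parallel>\<close>. Since \<open>(z - J\<^sub>\<rho>\<^sub>T z)/\<rho> \<in> T(J\<^sub>\<rho>\<^sub>T z)\<close>, monotonicity of \<open>T\<close>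
  at \<open>J\<^sub>r\<^sub>1\<^sub>T z\<close> and \<open>J\<^sub>r\<^sub>2\<^sub>T z\<close> together with Cauchy-Schwarz gives
  \<open>(\<phi>(r\<^sub>1) - \<phi>(r\<^sub>2))(r\<^sub>2\<phi>(r\<^sub>1) - r\<^sub>1\<phi>(r\<^sub>2)) \<le> 0\<close>, so \<open>\<phi>\<close> is nondecreasing and \<open>\<phi>(\<rho>)/\<rho>\<close>
  is nonincreasing. As \<open>\<phi> > 0\<close> when \<open>0 \<notin> T z\<close>, \<open>\<rho>\<phi>(\<rho>)\<close> is strictly increasing, \<open>\<phi>\<close> is locally
  Lipschitz, and \<open>\<psi>(\<rho>)/\<rho>\<^sup>4\<close> is nonincreasing term by term, which is the ratio bound. The level
  set statement is the intermediate value theorem for a strictly increasing function.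

  The resolvent is given only by a definite description, so Minty's theorem has to be
  proved: after shifting and scaling \<open>T\<close> it suffices to find \<open>x\<close> with \<open>-x \<in> T x\<close>. Each graph
  point \<open>(y, v)\<close> determines the ball of radius \<open>\<parallel>y + v\<parallel>\<close> about \<open>(-v, -y)\<close> in \<open>H \<times> H\<close>, and by the
  identity \<open>2\<langle>x - y, u - v\<rangle> = \<parallel>x + u\<parallel>\<^sup>2 + \<parallel>y + v\<parallel>\<^sup>2 - \<parallel>x + v\<parallel>\<^sup>2 - \<parallel>u + y\<parallel>\<^sup>2\<close> a point \<open>(x, u)\<close> common to
  all these balls is monotonically related to the graph, so \<open>u \<in> T x\<close> by maximality and then
  \<open>x + u = 0\<close>. Finitely many balls contain \<open>(-V, -Y)\<close> for a maximiser \<open>(Y, V, s)\<close> of the concave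
  function \<open>-s - (\<parallel>Y\<parallel>\<^sup>2 + \<parallel>V\<parallel>\<^sup>2)/2\<close> over the convex hull of the lifted points \<open>(y, v, \<langle>y, v\<rangle>)\<close>.
  All balls then meet because closed bounded convex sets of a Hilbert space have the
  finite intersection property, which is shown with minimising sequences and the
  parallelogram law in place of weak compactness.
\<close>

section \<open>Closed convex sets in a Hilbert space\<close>

lemma norm_add_sq:
  fixes x y :: "'a::real_inner"
  shows "(norm (x + y))\<^sup>2 = (norm x)\<^sup>2 + 2 * inner x y + (norm y)\<^sup>2"
  by (simp add: power2_norm_eq_inner inner_add_left inner_add_right inner_commute)

lemma norm_diff_sq:
  fixes x y :: "'a::real_inner"
  shows "(norm (x - y))\<^sup>2 = (norm x)\<^sup>2 - 2 * inner x y + (norm y)\<^sup>2"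
  by (simp add: power2_norm_eq_inner inner_diff_left inner_diff_right inner_commute)

lemma convex_norm_diff_sq_le:
  fixes x y :: "'a::real_inner"
  assumes "convex K" "x \<in> K" "y \<in> K" "(norm x)\<^sup>2 \<le> A" "(norm y)\<^sup>2 \<le> A"
    and "\<And>w. w \<in> K \<Longrightarrow> B \<le> (norm w)\<^sup>2"
  shows "(norm (x - y))\<^sup>2 \<le> 4 * (A - B)"
proof -
  have "(1/2) *\<^sub>R x + (1/2) *\<^sub>R y \<in> K"
    using assms(1-3) by (rule convexD) auto
  then have "B \<le> (norm ((1/2) *\<^sub>R (x + y)))\<^sup>2"
    using assms(6) by (simp add: scaleR_add_right)
  also have "\<dots> = (norm (x + y))\<^sup>2 / 4"
    by (simp add: power2_eq_square)
  finally show ?thesis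
    using assms(4,5) norm_add_sq[of x y] norm_diff_sq[of x y] by (simp add: field_simps)
qed

definition min_sq_norm :: "'a::real_normed_vector set \<Rightarrow> real" where
  "min_sq_norm K = (INF w\<in>K. (norm w)\<^sup>2)"

lemma bdd_below_sq_norm: "bdd_below ((\<lambda>w. (norm w)\<^sup>2) ` K)"
  by (rule bdd_belowI2[of _ 0]) simp

lemma min_sq_norm_le: "w \<in> K \<Longrightarrow> min_sq_norm K \<le> (norm w)\<^sup>2"
  unfolding min_sq_norm_def by (rule cINF_lower[OF bdd_below_sq_norm])

lemma min_sq_norm_antimono: "K' \<subseteq> K \<Longrightarrow> K' \<noteq> {} \<Longrightarrow> min_sq_norm K \<le> min_sq_norm K'"
  unfolding min_sq_norm_def by (rule cINF_superset_mono[OF _ bdd_below_sq_norm]) auto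

lemma min_sq_norm_approx:
  assumes "K \<noteq> {}" "0 < e"
  shows "\<exists>w\<in>K. (norm w)\<^sup>2 < min_sq_norm K + e"
  using assms cINF_less_iff[OF assms(1) bdd_below_sq_norm, of "min_sq_norm K + e"]
  unfolding min_sq_norm_def by simp

lemma Cauchy_if_dist_le_null:
  fixes w :: "nat \<Rightarrow> 'a::metric_space"
  assumes "\<And>n m. n \<le> m \<Longrightarrow> dist (w n) (w m) \<le> g n" and "g \<longlonglongrightarrow> 0"
  shows "Cauchy w"
  unfolding Cauchy_altdef2
proof (intro allI impI)
  fix e :: real assume "0 < e"
  then obtain N where "g N < e"
    using order_tendstoD(2)[OF assms(2)] by (auto simp: eventually_sequentially)
  then show "\<exists>N. \<forall>n\<ge>N. dist (w n) (w N) < e"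
    using assms(1) by (metis dist_commute order.strict_trans1)
qed

lemma convex_near_min_sq_norm_dist_le:
  fixes x y :: "'a::real_inner"
  assumes "convex K" "x \<in> K" "y \<in> K" "M - \<epsilon> \<le> min_sq_norm K"
    and "(norm x)\<^sup>2 \<le> M + \<epsilon>" "(norm y)\<^sup>2 \<le> M + \<epsilon>"
  shows "dist x y \<le> sqrt (8 * \<epsilon>)"
proof -
  have "(norm (x - y))\<^sup>2 \<le> 4 * ((M + \<epsilon>) - (M - \<epsilon>))"
    using assms min_sq_norm_le[of _ K] by (intro convex_norm_diff_sq_le[of K]) force+
  then show ?thesis
    unfolding dist_norm by (simp add: real_le_rsqrt)
qed

lemma directed_min_sq_norm_chain:
  fixes \<K> :: "'a::real_normed_vector set set"
  assumes "\<K> \<noteq> {}" "\<And>K. K \<in> \<K> \<Longrightarrow> K \<noteq> {}"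
    and directed: "\<And>K1 K2. K1 \<in> \<K> \<Longrightarrow> K2 \<in> \<K> \<Longrightarrow> \<exists>K\<in>\<K>. K \<subseteq> K1 \<inter> K2"
    and bdd: "bdd_above (min_sq_norm ` \<K>)" and "\<And>n. 0 < e n"
  obtains C where "\<And>n. C n \<in> \<K>" "\<And>n. (SUP K\<in>\<K>. min_sq_norm K) - e n < min_sq_norm (C n)" "decseq C"
proof -
  let ?M = "SUP K\<in>\<K>. min_sq_norm K"
  have refine: "\<exists>K'\<in>\<K>. K' \<subseteq> K \<and> ?M - e n < min_sq_norm K'" if K: "K \<in> \<K>" for K n
  proof -
    obtain K1 where K1: "K1 \<in> \<K>" "?M - e n < min_sq_norm K1"
      using less_cSUP_iff[OF assms(1) bdd, of "?M - e n"] assms(5) by auto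
    obtain K' where "K' \<in> \<K>" "K' \<subseteq> K \<inter> K1"
      using directed[OF K K1(1)] by blast
    then show ?thesis
      using K1 min_sq_norm_antimono[of K' K1] assms(2) by force
  qed
  obtain C where "\<forall>n. (C n \<in> \<K> \<and> ?M - e n < min_sq_norm (C n)) \<and> C (Suc n) \<subseteq> C n"
    using dependent_nat_choice[of "\<lambda>n K. K \<in> \<K> \<and> ?M - e n < min_sq_norm K" "\<lambda>_ K K'. K' \<subseteq> K"]
      refine assms(1) by (metis all_not_in_conv)
  then show ?thesis
    using that[of C] by (simp add: decseq_Suc_iff)
qed

lemma decseq_convex_near_min_common_limit:
  fixes C :: "nat \<Rightarrow> 'a::{real_inner,complete_space} set"
  assumes "decseq C" "\<And>n. convex (C n)" "\<And>n. M - e n \<le> min_sq_norm (C n)"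
    and "decseq e" "e \<longlonglongrightarrow> 0" and near_min: "\<And>n. \<exists>w\<in>C n. (norm w)\<^sup>2 \<le> M + e n"
  shows "\<exists>p. \<forall>v. (\<forall>n. v n \<in> C n \<and> (norm (v n))\<^sup>2 \<le> M + e n) \<longrightarrow> v \<longlonglongrightarrow> p"
proof -
  define g where "g n = sqrt (8 * e n)" for n
  have close: "dist x y \<le> g n"
    if "x \<in> C n" "y \<in> C n" "(norm x)\<^sup>2 \<le> M + e n" "(norm y)\<^sup>2 \<le> M + e n" for x y n
    unfolding g_def using assms(2,3) that by (intro convex_near_min_sq_norm_dist_le)
  have "g \<longlonglongrightarrow> sqrt (8 * 0)"
    unfolding g_def by (intro tendsto_intros assms(5))
  then have g_null: "g \<longlonglongrightarrow> 0"
    by simp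
  obtain w where w: "\<And>n. w n \<in> C n" "\<And>n. (norm (w n))\<^sup>2 \<le> M + e n"
    using near_min by metis
  have "Cauchy w"
  proof (rule Cauchy_if_dist_le_null[OF _ g_null])
    fix n m :: nat assume "n \<le> m"
    then have "e m \<le> e n" "C m \<subseteq> C n"
      using assms(1,4) by (auto simp: decseqD)
    then show "dist (w n) (w m) \<le> g n"
      using w[of n] w[of m] by (intro close) auto
  qed
  then obtain p where p: "w \<longlonglongrightarrow> p"
    using Cauchy_convergent_iff convergent_def by blast
  have "v \<longlonglongrightarrow> p" if v: "\<forall>n. v n \<in> C n \<and> (norm (v n))\<^sup>2 \<le> M + e n" for v
  proof -
    have "norm (v n - w n) \<le> g n" for n
      using close[of "v n" n "w n"] v w by (simp add: dist_norm)
    then have "(\<lambda>n. v n - w n) \<longlonglongrightarrow> 0"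
      by (intro Lim_null_comparison[OF always_eventually g_null]) blast
    then show "v \<longlonglongrightarrow> p"
      by (rule Lim_transform[OF p])
  qed
  then show ?thesis
    by blast
qed

lemma directed_convex_common_closure_point:
  fixes \<K> :: "'a::{real_inner,complete_space} set set"
  assumes "\<K> \<noteq> {}" and convex: "\<And>K. K \<in> \<K> \<Longrightarrow> convex K" and nonempty: "\<And>K. K \<in> \<K> \<Longrightarrow> K \<noteq> {}"
    and directed: "\<And>K1 K2. K1 \<in> \<K> \<Longrightarrow> K2 \<in> \<K> \<Longrightarrow> \<exists>K\<in>\<K>. K \<subseteq> K1 \<inter> K2"
    and bdd: "bdd_above (min_sq_norm ` \<K>)"
  shows "\<exists>p. \<forall>K\<in>\<K>. p \<in> closure K"
proof -
  define M where "M = (SUP K\<in>\<K>. min_sq_norm K)"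
  define e where "e n = inverse (real (Suc n))" for n
  obtain C where C: "\<And>n. C n \<in> \<K>" "\<And>n. M - e n < min_sq_norm (C n)" and "decseq C"
    using directed_min_sq_norm_chain[OF assms(1) nonempty directed bdd, of e]
    unfolding M_def e_def by auto
  have near_min: "\<exists>v\<in>K. (norm v)\<^sup>2 \<le> M + e n" if "K \<in> \<K>" for K n
    using min_sq_norm_approx[OF nonempty[OF that], of "e n"] cSUP_upper[OF that bdd]
    unfolding M_def e_def by force
  have "decseq e"
    unfolding e_def by (intro decseq_SucI) (simp add: field_simps)
  moreover have "e \<longlonglongrightarrow> 0"
    unfolding e_def by (rule LIMSEQ_inverse_real_of_nat)
  ultimately obtain p where p: "\<And>v. \<forall>n. v n \<in> C n \<and> (norm (v n))\<^sup>2 \<le> M + e n \<Longrightarrow> v \<longlonglongrightarrow> p"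
    using decseq_convex_near_min_common_limit[OF \<open>decseq C\<close>, of M e] convex C near_min
    by (meson less_imp_le)
  have "p \<in> closure K" if K: "K \<in> \<K>" for K
  proof -
    have "\<forall>n. \<exists>v. v \<in> K \<inter> C n \<and> (norm v)\<^sup>2 \<le> M + e n"
    proof
      fix n
      obtain K' where "K' \<in> \<K>" "K' \<subseteq> K \<inter> C n"
        using directed[OF K C(1)] by blast
      then show "\<exists>v. v \<in> K \<inter> C n \<and> (norm v)\<^sup>2 \<le> M + e n"
        using near_min[of K' n] by blast
    qed
    then obtain v where v: "\<forall>n. v n \<in> K \<inter> C n \<and> (norm (v n))\<^sup>2 \<le> M + e n"
      by metis
    then have "v \<longlonglongrightarrow> p"
      by (intro p) blast
    then show ?thesis
      unfolding closure_sequential using v by blast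
  qed
  then show ?thesis
    by blast
qed

lemma bdd_above_min_sq_norm:
  assumes "bounded B" "\<And>K. K \<in> \<K> \<Longrightarrow> K \<inter> B \<noteq> {}"
  shows "bdd_above (min_sq_norm ` \<K>)"
proof -
  obtain R where R: "\<And>x. x \<in> B \<Longrightarrow> norm x \<le> R"
    using assms(1) unfolding bounded_iff by blast
  have "min_sq_norm K \<le> R\<^sup>2" if K: "K \<in> \<K>" for K
  proof -
    obtain x where "x \<in> K" "x \<in> B"
      using assms(2)[OF K] by blast
    then show ?thesis
      using min_sq_norm_le[of x K] R[of x] by (smt (verit) norm_ge_zero power_mono)
  qed
  then show ?thesis
    by (intro bdd_aboveI2)
qed

lemma Inter_finite_subsets_directed:
  assumes "K1 \<in> Inter ` {F. finite F \<and> F \<subseteq> \<F>}" "K2 \<in> Inter ` {F. finite F \<and> F \<subseteq> \<F>}"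
  shows "\<exists>K \<in> Inter ` {F. finite F \<and> F \<subseteq> \<F>}. K \<subseteq> K1 \<inter> K2"
proof -
  obtain F1 F2 where "finite F1" "F1 \<subseteq> \<F>" "K1 = \<Inter>F1" "finite F2" "F2 \<subseteq> \<F>" "K2 = \<Inter>F2"
    using assms by blast
  then have "\<Inter>(F1 \<union> F2) \<in> Inter ` {F. finite F \<and> F \<subseteq> \<F>}" "\<Inter>(F1 \<union> F2) \<subseteq> K1 \<inter> K2"
    by (auto intro!: imageI)
  then show ?thesis ..
qed

lemma closed_convex_bounded_fip:
  fixes \<F> :: "'a::{real_inner,complete_space} set set"
  assumes "\<And>B. B \<in> \<F> \<Longrightarrow> closed B \<and> convex B \<and> bounded B"
    and "\<And>F. finite F \<Longrightarrow> F \<subseteq> \<F> \<Longrightarrow> \<Inter>F \<noteq> {}"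
  shows "\<Inter>\<F> \<noteq> {}"
proof (cases "\<F> = {}")
  case False
  then obtain B0 where B0: "B0 \<in> \<F>"
    by blast
  define \<K> where "\<K> = Inter ` {F. finite F \<and> F \<subseteq> \<F>}"
  have "\<exists>p. \<forall>K\<in>\<K>. p \<in> closure K"
  proof (rule directed_convex_common_closure_point)
    fix K assume "K \<in> \<K>"
    then obtain F where F: "finite F" "F \<subseteq> \<F>" "K = \<Inter>F"
      unfolding \<K>_def by blast
    show "convex K"
      unfolding F(3) by (rule convex_Inter) (use F(2) assms(1) in blast)
    show "K \<noteq> {}"
      using assms(2)[OF F(1,2)] F(3) by blast
  next
    have "K \<inter> B0 \<noteq> {}" if "K \<in> \<K>" for K
      using that assms(2)[of "insert B0 _"] B0 unfolding \<K>_def by fastforce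
    moreover have "bounded B0"
      using assms(1)[OF B0] by blast
    ultimately show "bdd_above (min_sq_norm ` \<K>)"
      by (intro bdd_above_min_sq_norm)
  qed (use Inter_finite_subsets_directed[of _ \<F>] in \<open>auto simp: \<K>_def\<close>)
  then obtain p where p: "\<And>K. K \<in> \<K> \<Longrightarrow> p \<in> closure K"
    by blast
  have "p \<in> B" if "B \<in> \<F>" for B
  proof -
    have "\<Inter>{B} \<in> \<K>"
      unfolding \<K>_def using that by (intro imageI) simp
    then show ?thesis
      using p[of B] assms(1)[OF that] by (simp add: closure_closed)
  qed
  then show ?thesis
    by blast
qed simp

section \<open>Minty's theorem\<close>

lemma maximal_monotone_imp_monotone: "maximal_monotone T \<Longrightarrow> monotone_op T"
  unfolding maximal_monotone_def by blast

lemma maximal_monotone_memI: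
  assumes "maximal_monotone T" "\<And>y v. v \<in> T y \<Longrightarrow> 0 \<le> inner (x - y) (u - v)"
  shows "u \<in> T x"
  using assms unfolding maximal_monotone_def by blast

fun graph_lift :: "'a::real_inner \<times> 'a \<Rightarrow> 'a \<times> 'a \<times> real" where
  "graph_lift (y, v) = (y, v, inner y v)"

fun lifted_pairing :: "'a::real_inner \<times> 'a \<times> real \<Rightarrow> 'a \<times> 'a \<times> real \<Rightarrow> real" where
  "lifted_pairing (y, v, s) (y', v', s') = s + s' - inner y v' - inner y' v"

lemma lifted_pairing_graph_lift:
  "lifted_pairing (graph_lift (y, v)) (graph_lift (y', v')) = inner (y - y') (v - v')"
  by (simp add: inner_diff_left inner_diff_right inner_commute)

lemma lifted_pairing_commute: "lifted_pairing q q' = lifted_pairing q' q"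
  by (cases q; cases q') auto

lemma convex_lifted_pairing_nonneg: "convex {q. 0 \<le> lifted_pairing q q'}"
proof -
  obtain y' v' s' where q': "q' = (y', v', s')"
    by (cases q') auto
  have "{q. 0 \<le> lifted_pairing q q'} = {q. - s' \<le> inner (- v', - y', 1::real) q}"
    unfolding q' by (auto simp: inner_prod_def inner_commute)
  then show ?thesis
    using convex_halfspace_ge by metis
qed

lemma convex_hull_pairwise:
  assumes convex: "\<And>q'. convex {q. R q q'}" and sym: "\<And>q q'. R q q' \<Longrightarrow> R q' q"
    and L: "\<And>q q'. q \<in> L \<Longrightarrow> q' \<in> L \<Longrightarrow> R q q'"
    and "q \<in> convex hull L" "q' \<in> convex hull L"
  shows "R q q'"
proof -
  have "convex hull L \<subseteq> {q. R q q'}" if "q' \<in> L" for q'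
    using convex L that by (intro hull_minimal) auto
  then have "L \<subseteq> {q'. R q' q}"
    using \<open>q \<in> convex hull L\<close> sym by blast
  then have "convex hull L \<subseteq> {q'. R q' q}"
    using convex by (intro hull_minimal) auto
  then show ?thesis
    using \<open>q' \<in> convex hull L\<close> sym by blast
qed

lemma lifted_pairing_hull_nonneg:
  assumes "monotone_op T" "S \<subseteq> {(y, v). v \<in> T y}"
    and "q \<in> convex hull (graph_lift ` S)" "q' \<in> convex hull (graph_lift ` S)"
  shows "0 \<le> lifted_pairing q q'"
proof (rule convex_hull_pairwise[OF convex_lifted_pairing_nonneg _ _ assms(3,4)])
  fix q q' assume "q \<in> graph_lift ` S" "q' \<in> graph_lift ` S"
  then obtain y v y' v' where "v \<in> T y" "v' \<in> T y'" "q = graph_lift (y, v)" "q' = graph_lift (y', v')"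
    using assms(2) by (fastforce simp del: graph_lift.simps)
  then show "0 \<le> lifted_pairing q q'"
    using assms(1) unfolding monotone_op_def by (simp only: lifted_pairing_graph_lift)
qed (simp add: lifted_pairing_commute)

lemma nonpos_if_le_square:
  fixes L N :: real
  assumes "\<And>t. 0 < t \<Longrightarrow> t \<le> 1 \<Longrightarrow> t * L \<le> t\<^sup>2 * N"
  shows "L \<le> 0"
proof (rule field_le_epsilon)
  fix e :: real assume "0 < e"
  define t where "t = min 1 (e / (\<bar>N\<bar> + 1))"
  have t: "0 < t" "t \<le> 1" "t \<le> e / (\<bar>N\<bar> + 1)"
    unfolding t_def using \<open>0 < e\<close> by auto
  then have "L \<le> t * N"
    using assms[OF t(1,2)] by (simp add: power2_eq_square)
  also have "\<dots> \<le> t * (\<bar>N\<bar> + 1)"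
    using t by (intro mult_left_mono) auto
  also have "\<dots> \<le> e"
    using t by (simp add: pos_le_divide_eq)
  finally show "L \<le> 0 + e" by simp
qed

lemma norm_add_scaleR_sq:
  fixes x d :: "'a::real_inner"
  shows "(norm (x + t *\<^sub>R d))\<^sup>2 = (norm x)\<^sup>2 + 2 * t * inner x d + t\<^sup>2 * (norm d)\<^sup>2"
  by (simp add: norm_add_sq power_mult_distrib)

definition minty_potential :: "'a::real_inner \<times> 'a \<times> real \<Rightarrow> real" where
  "minty_potential q = - snd (snd q) - ((norm (fst q))\<^sup>2 + (norm (fst (snd q)))\<^sup>2) / 2"

lemma minty_potential_max_first_order:
  fixes Y V y v :: "'a::real_inner"
  assumes "convex Q" "(Y, V, s) \<in> Q" "(y, v, s') \<in> Q"
    and max: "\<And>q. q \<in> Q \<Longrightarrow> minty_potential q \<le> minty_potential (Y, V, s)"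
  shows "0 \<le> s' - s + inner Y (y - Y) + inner V (v - V)"
proof -
  define N where "N = ((norm (y - Y))\<^sup>2 + (norm (v - V))\<^sup>2) / 2"
  have "t * - (s' - s + inner Y (y - Y) + inner V (v - V)) \<le> t\<^sup>2 * N" if t: "0 < t" "t \<le> 1" for t
  proof -
    have "(1 - t) *\<^sub>R (Y, V, s) + t *\<^sub>R (y, v, s') \<in> Q"
      using assms(1-3) t by (intro convexD) auto
    moreover have "(1 - t) *\<^sub>R (Y, V, s) + t *\<^sub>R (y, v, s')
        = (Y + t *\<^sub>R (y - Y), V + t *\<^sub>R (v - V), s + t * (s' - s))"
      by (simp add: algebra_simps)
    ultimately have "minty_potential (Y + t *\<^sub>R (y - Y), V + t *\<^sub>R (v - V), s + t * (s' - s))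
        \<le> minty_potential (Y, V, s)"
      using max by metis
    then show ?thesis
      unfolding minty_potential_def N_def fst_conv snd_conv norm_add_scaleR_sq
      by (simp add: field_simps)
  qed
  then show ?thesis
    using nonpos_if_le_square by (metis neg_le_0_iff_le)
qed

fun minty_ball :: "'a::real_inner \<times> 'a \<Rightarrow> ('a \<times> 'a) set" where
  "minty_ball (y, v) = cball (- v, - y) (norm (y + v))"

lemma mem_minty_ball:
  "(x, u) \<in> minty_ball (y, v) \<longleftrightarrow> (norm (x + v))\<^sup>2 + (norm (u + y))\<^sup>2 \<le> (norm (y + v))\<^sup>2"
proof -
  have "dist (- v) x = norm (x + v)" "dist (- y) u = norm (u + y)"
    by (simp_all add: dist_commute dist_norm)
  then have "dist (- v, - y) (x, u) = sqrt ((norm (x + v))\<^sup>2 + (norm (u + y))\<^sup>2)"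
    by (simp add: dist_Pair_Pair)
  then have "(x, u) \<in> minty_ball (y, v) \<longleftrightarrow> sqrt ((norm (x + v))\<^sup>2 + (norm (u + y))\<^sup>2) \<le> norm (y + v)"
    by simp
  also have "\<dots> \<longleftrightarrow> (norm (x + v))\<^sup>2 + (norm (u + y))\<^sup>2 \<le> (norm (y + v))\<^sup>2"
    by (simp add: real_sqrt_le_iff')
  finally show ?thesis .
qed

lemma minty_balls_finite_meet:
  fixes T :: "'a::real_inner \<Rightarrow> 'a set"
  assumes "monotone_op T" "finite S" "S \<subseteq> {(y, v). v \<in> T y}"
  shows "\<exists>w. \<forall>p\<in>S. w \<in> minty_ball p"
proof (cases "S = {}")
  case False
  define Q where "Q = convex hull (graph_lift ` S)"
  have "compact Q" "Q \<noteq> {}"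
    unfolding Q_def using assms(2) False by (auto intro: finite_imp_compact_convex_hull)
  moreover have "continuous_on Q minty_potential"
    unfolding minty_potential_def by (intro continuous_intros) auto
  ultimately obtain Y V s where max: "(Y, V, s) \<in> Q" "\<And>q. q \<in> Q \<Longrightarrow> minty_potential q \<le> minty_potential (Y, V, s)"
    using continuous_attains_sup by (metis prod_cases3)
  have "0 \<le> lifted_pairing (Y, V, s) (Y, V, s)"
    using lifted_pairing_hull_nonneg[OF assms(1,3) max(1,1)[unfolded Q_def]] .
  then have YV: "inner Y V \<le> s"
    by simp
  have "(- V, - Y) \<in> minty_ball (y, v)" if "(y, v) \<in> S" for y v
  proof -
    have "graph_lift (y, v) \<in> Q"
      unfolding Q_def using that by (intro hull_inc imageI)
    then have "0 \<le> inner y v - s + inner Y (y - Y) + inner V (v - V)"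
      using minty_potential_max_first_order[OF _ max(1) _ max(2)] unfolding Q_def by simp
    moreover have "0 \<le> (norm (Y + V))\<^sup>2"
      by simp
    ultimately show ?thesis
      using YV power2_norm_eq_inner[of V] power2_norm_eq_inner[of Y]
      unfolding mem_minty_ball norm_add_sq by (simp add: inner_diff_right inner_commute)
  qed
  then show ?thesis
    using assms(3) by blast
qed simp

lemma minty_identity:
  fixes x y u v :: "'a::real_inner"
  shows "2 * inner (x - y) (u - v)
    = (norm (x + u))\<^sup>2 + (norm (y + v))\<^sup>2 - (norm (x + v))\<^sup>2 - (norm (u + y))\<^sup>2"
  by (simp add: norm_add_sq inner_diff_left inner_diff_right inner_commute)

lemma maximal_monotone_ex_minus_mem:
  fixes T :: "'a::{real_inner,complete_space} \<Rightarrow> 'a set"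
  assumes "maximal_monotone T"
  shows "\<exists>x. - x \<in> T x"
proof -
  define G where "G = {(y, v). v \<in> T y}"
  have "\<Inter> (minty_ball ` G) \<noteq> {}"
  proof (rule closed_convex_bounded_fip)
    fix F assume "finite F" "F \<subseteq> minty_ball ` G"
    then obtain S where "S \<subseteq> G" "finite S" "F = minty_ball ` S"
      by (meson finite_subset_image)
    then show "\<Inter> F \<noteq> {}"
      using minty_balls_finite_meet[OF maximal_monotone_imp_monotone[OF assms], of S]
      unfolding G_def by blast
  qed (auto simp: G_def)
  then obtain x u where xu: "\<And>y v. v \<in> T y \<Longrightarrow> (x, u) \<in> minty_ball (y, v)"
    unfolding G_def by fastforce
  have "u \<in> T x"
  proof (rule maximal_monotone_memI[OF assms])
    fix y v assume "v \<in> T y"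
    then show "0 \<le> inner (x - y) (u - v)"
      using xu[of v y] minty_identity[of x y u v] unfolding mem_minty_ball
      by (smt (verit) zero_le_power2)
  qed
  then have "x + u = 0"
    using xu[of u x] unfolding mem_minty_ball by (simp add: add.commute)
  then show ?thesis
    using \<open>u \<in> T x\<close> by (metis add.inverse_unique)
qed

section \<open>The resolvent\<close>

lemma maximal_monotone_shift_scale:
  fixes T :: "'a::real_inner \<Rightarrow> 'a set"
  assumes "maximal_monotone T" "0 < \<rho>"
  shows "maximal_monotone (\<lambda>y. (*\<^sub>R) \<rho> ` T (y + z))"
  unfolding maximal_monotone_def monotone_op_def
proof (intro conjI allI impI)
  fix x y u v assume "u \<in> (*\<^sub>R) \<rho> ` T (x + z)" "v \<in> (*\<^sub>R) \<rho> ` T (y + z)"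
  then obtain u' v' where "u' \<in> T (x + z)" "v' \<in> T (y + z)" "u = \<rho> *\<^sub>R u'" "v = \<rho> *\<^sub>R v'"
    by blast
  moreover from this have "0 \<le> inner ((x + z) - (y + z)) (u' - v')"
    using maximal_monotone_imp_monotone[OF assms(1)] unfolding monotone_op_def by blast
  ultimately show "0 \<le> inner (x - y) (u - v)"
    using assms(2) by (simp add: scaleR_diff_right[symmetric])
next
  fix x u assume related: "\<forall>y v. v \<in> (*\<^sub>R) \<rho> ` T (y + z) \<longrightarrow> 0 \<le> inner (x - y) (u - v)"
  have "inverse \<rho> *\<^sub>R u \<in> T (x + z)"
  proof (rule maximal_monotone_memI[OF assms(1)])
    fix y v assume "v \<in> T y"
    then have "\<rho> *\<^sub>R v \<in> (*\<^sub>R) \<rho> ` T ((y - z) + z)"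
      by force
    then have "0 \<le> inner (x - (y - z)) (u - \<rho> *\<^sub>R v)"
      using related by blast
    moreover have "inner (x + z - y) (inverse \<rho> *\<^sub>R u - v)
        = inverse \<rho> * inner (x - (y - z)) (u - \<rho> *\<^sub>R v)"
      using assms(2) by (simp add: inner_diff_left inner_diff_right field_simps)
    ultimately show "0 \<le> inner (x + z - y) (inverse \<rho> *\<^sub>R u - v)"
      using assms(2) by simp
  qed
  then show "u \<in> (*\<^sub>R) \<rho> ` T (x + z)"
    using assms(2) by (auto intro!: image_eqI[of _ _ "inverse \<rho> *\<^sub>R u"])
qed

lemma resolvent_unique:
  fixes T :: "'a::real_inner \<Rightarrow> 'a set"
  assumes "monotone_op T" "0 < \<rho>"
    and "u \<in> T x" "z = x + \<rho> *\<^sub>R u" "u' \<in> T x'" "z = x' + \<rho> *\<^sub>R u'"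
  shows "x = x'"
proof -
  have "0 \<le> inner (x - x') (u - u')"
    using assms(1,3,5) unfolding monotone_op_def by blast
  moreover have "\<rho> *\<^sub>R (u - u') = - (x - x')"
    using assms(4,6) by (simp add: algebra_simps)
  then have "\<rho> * inner (x - x') (u - u') = - inner (x - x') (x - x')"
    by (metis inner_minus_right inner_scaleR_right)
  ultimately have "inner (x - x') (x - x') \<le> 0"
    using assms(2) by (smt (verit) mult_nonneg_nonneg)
  then show ?thesis
    by (metis antisym inner_ge_zero inner_eq_zero_iff eq_iff_diff_eq_0)
qed

lemma resolvent_eq:
  fixes T :: "'a::{real_inner,complete_space} \<Rightarrow> 'a set"
  assumes "maximal_monotone T" "0 < \<rho>"
  shows "\<exists>u\<in>T (resolvent \<rho> T z). z = resolvent \<rho> T z + \<rho> *\<^sub>R u"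
  unfolding resolvent_def
proof (rule theI')
  obtain y where "- y \<in> (*\<^sub>R) \<rho> ` T (y + z)"
    using maximal_monotone_ex_minus_mem[OF maximal_monotone_shift_scale[OF assms]] by blast
  then obtain u where "u \<in> T (y + z)" "\<rho> *\<^sub>R u = - y"
    by auto
  then have "\<exists>u\<in>T (y + z). z = (y + z) + \<rho> *\<^sub>R u"
    by (metis add_minus_cancel add.commute)
  then show "\<exists>!x. \<exists>u\<in>T x. z = x + \<rho> *\<^sub>R u"
    using resolvent_unique[OF maximal_monotone_imp_monotone[OF assms(1)] assms(2)] by blast
qed

lemma resolvent_mem:
  fixes T :: "'a::{real_inner,complete_space} \<Rightarrow> 'a set"
  assumes "maximal_monotone T" "0 < \<rho>"
  shows "inverse \<rho> *\<^sub>R (z - resolvent \<rho> T z) \<in> T (resolvent \<rho> T z)"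
proof -
  obtain u where "u \<in> T (resolvent \<rho> T z)" "z - resolvent \<rho> T z = \<rho> *\<^sub>R u"
    using resolvent_eq[OF assms, of z] by (metis add_diff_cancel_left')
  then show ?thesis
    using assms(2) by simp
qed

lemma le_and_scaled_ge_of_product_ineq:
  fixes A B r1 r2 :: real
  assumes "0 \<le> A" "0 \<le> B" "0 < r1" "r1 \<le> r2"
    and "r2 * A\<^sup>2 + r1 * B\<^sup>2 \<le> (r1 + r2) * (A * B)"
  shows "A \<le> B \<and> r1 * B \<le> r2 * A"
proof -
  have key: "(A - B) * (r2 * A - r1 * B) \<le> 0"
    using assms(5) by (simp add: algebra_simps power2_eq_square)
  have "r1 * B < r2 * A" if "B < A"
    using assms(3,4) that mult_strict_left_mono[OF that assms(3)] mult_right_mono[OF assms(4,1)]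
    by linarith
  then have "A \<le> B"
    using key by (smt (verit) mult_pos_pos)
  moreover have "r1 * B \<le> r2 * A"
  proof (rule ccontr)
    assume "\<not> r1 * B \<le> r2 * A"
    then have "B \<le> A"
      using key by (smt (verit) mult_le_0_iff)
    then have "A = B"
      using \<open>A \<le> B\<close> by simp
    then show False
      using \<open>\<not> r1 * B \<le> r2 * A\<close> mult_right_mono[OF assms(4,1)] by simp
  qed
  ultimately show ?thesis ..
qed

lemma resolvent_dist_ineq:
  fixes T :: "'a::{real_inner,complete_space} \<Rightarrow> 'a set"
  assumes "maximal_monotone T" "0 < r1" "r1 \<le> r2"
  shows "r2 * (norm (resolvent r1 T z - z))\<^sup>2 + r1 * (norm (resolvent r2 T z - z))\<^sup>2
    \<le> (r1 + r2) * (norm (resolvent r1 T z - z) * norm (resolvent r2 T z - z))"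
proof -
  define d1 d2 where "d1 = z - resolvent r1 T z" and "d2 = z - resolvent r2 T z"
  have "0 \<le> inner (resolvent r1 T z - resolvent r2 T z) (inverse r1 *\<^sub>R d1 - inverse r2 *\<^sub>R d2)"
    using maximal_monotone_imp_monotone[OF assms(1)] resolvent_mem[OF assms(1,2), of z]
      resolvent_mem[OF assms(1), of r2 z] assms(2,3)
    unfolding d1_def d2_def monotone_op_def by simp
  also have "\<dots> = inverse r1 * (inner d1 d2 - (norm d1)\<^sup>2) + inverse r2 * (inner d1 d2 - (norm d2)\<^sup>2)"
    unfolding d1_def d2_def
    by (simp add: inner_diff_left inner_diff_right inner_commute power2_norm_eq_inner algebra_simps)
  finally have "0 \<le> r1 * r2 * (inverse r1 * (inner d1 d2 - (norm d1)\<^sup>2) + inverse r2 * (inner d1 d2 - (norm d2)\<^sup>2))"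
    using assms(2,3) by simp
  also have "\<dots> = r2 * (inner d1 d2 - (norm d1)\<^sup>2) + r1 * (inner d1 d2 - (norm d2)\<^sup>2)"
    using assms(2,3) by (simp add: distrib_left field_simps)
  finally have "r2 * (norm d1)\<^sup>2 + r1 * (norm d2)\<^sup>2 \<le> (r1 + r2) * inner d1 d2"
    by (simp add: algebra_simps)
  also have "\<dots> \<le> (r1 + r2) * (norm d1 * norm d2)"
    using assms(2,3) norm_cauchy_schwarz[of d1 d2] by (intro mult_left_mono) auto
  finally show ?thesis
    unfolding d1_def d2_def by (simp add: norm_minus_commute)
qed

lemma resolvent_dist_mono:
  fixes T :: "'a::{real_inner,complete_space} \<Rightarrow> 'a set"
  assumes "maximal_monotone T" "0 < r1" "r1 \<le> r2"
  shows "norm (resolvent r1 T z - z) \<le> norm (resolvent r2 T z - z)"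
  using le_and_scaled_ge_of_product_ineq[OF norm_ge_zero norm_ge_zero assms(2,3) resolvent_dist_ineq[OF assms]]
  by blast

lemma resolvent_dist_div_antimono:
  fixes T :: "'a::{real_inner,complete_space} \<Rightarrow> 'a set"
  assumes "maximal_monotone T" "0 < r1" "r1 \<le> r2"
  shows "r1 * norm (resolvent r2 T z - z) \<le> r2 * norm (resolvent r1 T z - z)"
  using le_and_scaled_ge_of_product_ineq[OF norm_ge_zero norm_ge_zero assms(2,3) resolvent_dist_ineq[OF assms]]
  by blast

lemma resolvent_dist_pos:
  fixes T :: "'a::{real_inner,complete_space} \<Rightarrow> 'a set"
  assumes "maximal_monotone T" "0 < \<rho>" "0 \<notin> T z"
  shows "0 < norm (resolvent \<rho> T z - z)"
  using resolvent_mem[OF assms(1,2), of z] assms(3) by (cases "resolvent \<rho> T z = z") auto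

lemma continuous_on_mono_div_antimono:
  fixes \<phi> :: "real \<Rightarrow> real"
  assumes mono: "\<And>r s. 0 < r \<Longrightarrow> r \<le> s \<Longrightarrow> \<phi> r \<le> \<phi> s"
    and div_antimono: "\<And>r s. 0 < r \<Longrightarrow> r \<le> s \<Longrightarrow> r * \<phi> s \<le> s * \<phi> r"
  shows "continuous_on {0<..} \<phi>"
proof (rule continuous_at_imp_continuous_on, intro ballI)
  fix r0 :: real assume "r0 \<in> {0<..}"
  then have r0: "0 < r0" by simp
  define c where "c = \<phi> r0 / r0"
  have "\<phi> r0 = r0 * c"
    unfolding c_def using r0 by simp
  have bound: "\<bar>\<phi> r - \<phi> r0\<bar> \<le> \<bar>r - r0\<bar> * c" if r: "0 < r" for r
  proof (cases "r \<le> r0")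
    case True
    have "r * c \<le> \<phi> r"
      using div_antimono[OF r True] r0 unfolding c_def by (simp add: field_simps)
    then show ?thesis
      using mono[OF r True] True \<open>\<phi> r0 = r0 * c\<close> by (simp add: abs_if algebra_simps)
  next
    case False
    have "\<phi> r \<le> r * c"
      using div_antimono[OF r0, of r] False r0 unfolding c_def by (simp add: field_simps)
    then show ?thesis
      using mono[OF r0, of r] False \<open>\<phi> r0 = r0 * c\<close> by (simp add: abs_if algebra_simps)
  qed
  have "\<forall>\<^sub>F r in at r0. 0 < r"
    using order_tendstoD(1)[OF tendsto_ident_at r0] .
  then have near: "\<forall>\<^sub>F r in at r0. norm (\<phi> r - \<phi> r0) \<le> \<bar>r - r0\<bar> * c"
    by eventually_elim (simp add: bound)
  have "((\<lambda>r. \<bar>r - r0\<bar>) \<longlongrightarrow> 0) (at r0)"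
    using tendsto_rabs[OF LIM_zero[OF tendsto_ident_at]] by simp
  then have "((\<lambda>r. \<bar>r - r0\<bar> * c) \<longlongrightarrow> 0) (at r0)"
    by (rule tendsto_mult_left_zero)
  with near have "((\<lambda>r. \<phi> r - \<phi> r0) \<longlongrightarrow> 0) (at r0)"
    by (rule Lim_null_comparison)
  then show "isCont \<phi> r0"
    unfolding isCont_def by (rule LIM_zero_cancel)
qed

section \<open>The function \<open>\<psi>\<close>\<close>

lemma psi_pos:
  fixes T :: "'a::{real_inner,complete_space} \<Rightarrow> 'a set"
  assumes "maximal_monotone T" "0 \<le> a" "0 \<le> b" "0 \<notin> T z" "0 < \<rho>"
  shows "0 < psi a b T \<rho> z"
  using resolvent_dist_pos[OF assms(1,5,4)] assms(2,3,5) unfolding psi_def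
  by (simp add: add_nonneg_pos)

lemma psi_strict_mono:
  fixes T :: "'a::{real_inner,complete_space} \<Rightarrow> 'a set"
  assumes "maximal_monotone T" "0 \<le> a" "0 \<le> b" "0 \<notin> T z"
  shows "strict_mono_on {0<..} (\<lambda>\<rho>. psi a b T \<rho> z)"
proof (rule strict_mono_onI)
  fix x y :: real assume "x \<in> {0<..}" "y \<in> {0<..}" "x < y"
  then have xy: "0 < x" "x < y" by auto
  let ?\<phi> = "\<lambda>\<rho>. norm (resolvent \<rho> T z - z)"
  have "x * ?\<phi> x < y * ?\<phi> x"
    using xy resolvent_dist_pos[OF assms(1) xy(1) assms(4)] by simp
  also have "\<dots> \<le> y * ?\<phi> y"
    using xy resolvent_dist_mono[OF assms(1) xy(1), of y z] by (intro mult_left_mono) auto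
  finally have "(x * ?\<phi> x)\<^sup>2 < (y * ?\<phi> y)\<^sup>2"
    using xy by (intro power_strict_mono) auto
  moreover have "a * x\<^sup>2 \<le> a * y\<^sup>2" "b * x \<le> b * y"
    using assms(2,3) xy by (auto intro!: mult_left_mono power_mono)
  ultimately show "psi a b T x z < psi a b T y z"
    unfolding psi_def by linarith
qed

lemma psi_continuous:
  fixes T :: "'a::{real_inner,complete_space} \<Rightarrow> 'a set"
  assumes "maximal_monotone T"
  shows "continuous_on {0<..} (\<lambda>\<rho>. psi a b T \<rho> z)"
proof -
  have "continuous_on {0<..} (\<lambda>\<rho>. norm (resolvent \<rho> T z - z))"
    using resolvent_dist_mono[OF assms] resolvent_dist_div_antimono[OF assms]
    by (rule continuous_on_mono_div_antimono)
  then have "continuous_on {0<..} (\<lambda>\<rho>. (\<rho> * norm (resolvent \<rho> T z - z))\<^sup>2)"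
    by (intro continuous_on_power continuous_on_mult continuous_on_id)
  moreover have "continuous_on {0<..} (\<lambda>\<rho>. a * \<rho>\<^sup>2 + b * \<rho>)"
    by (intro continuous_intros)
  ultimately show ?thesis
    unfolding psi_def by (rule continuous_on_add[rotated])
qed

lemma psi_tendsto_zero:
  fixes T :: "'a::{real_inner,complete_space} \<Rightarrow> 'a set"
  assumes "maximal_monotone T" "0 \<le> a" "0 \<le> b"
  shows "((\<lambda>\<rho>. psi a b T \<rho> z) \<longlongrightarrow> 0) (at_right 0)"
proof (rule tendsto_sandwich)
  let ?\<phi> = "\<lambda>\<rho>. norm (resolvent \<rho> T z - z)"
  have small: "\<forall>\<^sub>F \<rho> in at_right 0. \<rho> \<in> {0<..<1::real}"
    by (rule eventually_at_right_real) simp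
  then show "\<forall>\<^sub>F \<rho> in at_right 0. 0 \<le> psi a b T \<rho> z"
    by eventually_elim (use assms in \<open>simp add: psi_def\<close>)
  show "\<forall>\<^sub>F \<rho> in at_right 0. psi a b T \<rho> z \<le> a * \<rho>\<^sup>2 + b * \<rho> + (\<rho> * ?\<phi> 1)\<^sup>2"
    using small
  proof eventually_elim
    case (elim \<rho>)
    then have "\<rho> * ?\<phi> \<rho> \<le> \<rho> * ?\<phi> 1"
      using resolvent_dist_mono[OF assms(1), of \<rho> 1 z] by (intro mult_left_mono) auto
    then show ?case
      using elim unfolding psi_def by (simp add: power_mono)
  qed
  have "((\<lambda>\<rho>. a * \<rho>\<^sup>2 + b * \<rho> + (\<rho> * ?\<phi> 1)\<^sup>2) \<longlongrightarrow> a * 0\<^sup>2 + b * 0 + (0 * ?\<phi> 1)\<^sup>2) (at_right 0)"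
    by (intro tendsto_intros)
  then show "((\<lambda>\<rho>. a * \<rho>\<^sup>2 + b * \<rho> + (\<rho> * ?\<phi> 1)\<^sup>2) \<longlongrightarrow> 0) (at_right 0)"
    by simp
qed simp

lemma psi_at_top:
  fixes T :: "'a::{real_inner,complete_space} \<Rightarrow> 'a set"
  assumes "maximal_monotone T" "0 \<le> a" "0 \<le> b" "0 \<notin> T z"
  shows "filterlim (\<lambda>\<rho>. psi a b T \<rho> z) at_top at_top"
proof (rule filterlim_at_top_mono)
  let ?c = "(norm (resolvent 1 T z - z))\<^sup>2"
  have "0 < ?c"
    using resolvent_dist_pos[OF assms(1) _ assms(4)] by simp
  then show "filterlim (\<lambda>\<rho>. ?c * \<rho>) at_top at_top"
    by (rule filterlim_tendsto_pos_mult_at_top[OF tendsto_const _ filterlim_ident])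
  show "\<forall>\<^sub>F \<rho> in at_top. ?c * \<rho> \<le> psi a b T \<rho> z"
    using eventually_ge_at_top[of "1::real"]
  proof eventually_elim
    case (elim \<rho>)
    have "?c * \<rho> \<le> ?c * \<rho>\<^sup>2"
      using elim by (intro mult_left_mono) (auto simp: power2_eq_square)
    also have "\<dots> \<le> (\<rho> * norm (resolvent \<rho> T z - z))\<^sup>2"
      using elim resolvent_dist_mono[OF assms(1), of 1 \<rho> z]
      by (simp add: power_mult_distrib mult.commute mult_left_mono power_mono)
    also have "\<dots> \<le> psi a b T \<rho> z"
      using assms(2,3) elim unfolding psi_def by simp
    finally show ?case .
  qed
qed

lemma psi_ratio_le_pow4:
  fixes T :: "'a::{real_inner,complete_space} \<Rightarrow> 'a set"
  assumes "maximal_monotone T" "0 \<le> a" "0 \<le> b" "0 < x" "x \<le> y"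
  shows "psi a b T y z * x ^ 4 \<le> psi a b T x z * y ^ 4"
proof -
  let ?\<phi> = "\<lambda>\<rho>. norm (resolvent \<rho> T z - z)"
  have a_term: "a * y\<^sup>2 * x ^ 4 \<le> a * x\<^sup>2 * y ^ 4"
  proof -
    have "(a * x\<^sup>2 * y\<^sup>2) * x\<^sup>2 \<le> (a * x\<^sup>2 * y\<^sup>2) * y\<^sup>2"
      using assms(2,4,5) by (intro mult_left_mono power_mono) auto
    then show ?thesis
      by (simp add: power2_eq_square power4_eq_xxxx algebra_simps)
  qed
  have b_term: "b * y * x ^ 4 \<le> b * x * y ^ 4"
  proof -
    have "(b * x * y) * x ^ 3 \<le> (b * x * y) * y ^ 3"
      using assms(3,4,5) by (intro mult_left_mono power_mono) auto
    then show ?thesis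
      by (simp add: power3_eq_cube power4_eq_xxxx algebra_simps)
  qed
  have \<phi>_term: "(y * ?\<phi> y)\<^sup>2 * x ^ 4 \<le> (x * ?\<phi> x)\<^sup>2 * y ^ 4"
  proof -
    have "(x * ?\<phi> y)\<^sup>2 \<le> (y * ?\<phi> x)\<^sup>2"
      using resolvent_dist_div_antimono[OF assms(1,4,5)] assms(4) by (intro power_mono) auto
    then have "(x * ?\<phi> y)\<^sup>2 * (x\<^sup>2 * y\<^sup>2) \<le> (y * ?\<phi> x)\<^sup>2 * (x\<^sup>2 * y\<^sup>2)"
      by (intro mult_right_mono) auto
    then show ?thesis
      by (simp add: power2_eq_square power4_eq_xxxx algebra_simps)
  qed
  show ?thesis
    using a_term b_term \<phi>_term unfolding psi_def distrib_right by linarith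
qed

lemma continuous_level_attained:
  fixes f :: "real \<Rightarrow> real"
  assumes "continuous_on {0<..} f" "(f \<longlongrightarrow> 0) (at_right 0)" "filterlim f at_top at_top" "0 < \<theta>"
  shows "\<exists>\<rho>>0. f \<rho> = \<theta>"
proof -
  have "\<forall>\<^sub>F \<rho> in at_right 0. f \<rho> < \<theta> \<and> 0 < \<rho>"
    using order_tendstoD(2)[OF assms(2,4)] eventually_at_right_less by (rule eventually_conj)
  then obtain r1 where r1: "f r1 < \<theta>" "0 < r1"
    using eventually_happens'[OF trivial_limit_at_right_real] by blast
  obtain r2 where r2: "\<theta> \<le> f r2" "r1 \<le> r2"
    using assms(3) unfolding filterlim_at_top eventually_at_top_linorder
    by (metis max.cobounded1 max.cobounded2)
  have "continuous_on {r1..r2} f"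
    using r1(2) by (intro continuous_on_subset[OF assms(1)]) auto
  then obtain \<rho> where "r1 \<le> \<rho>" "f \<rho> = \<theta>"
    using IVT'[of f r1 \<theta> r2] r1 r2 by fastforce
  then show ?thesis
    using r1(2) by (intro exI[of _ \<rho>]) auto
qed

lemma strict_mono_on_level_set:
  fixes f :: "real \<Rightarrow> real"
  assumes "strict_mono_on {0<..} f" "0 < \<rho>m" "0 < \<rho>p" "f \<rho>m \<le> f \<rho>p"
  shows "\<rho>m \<le> \<rho>p \<and> {\<rho>. 0 < \<rho> \<and> f \<rho>m \<le> f \<rho> \<and> f \<rho> \<le> f \<rho>p} = {\<rho>m..\<rho>p}"
  using assms strict_mono_on_less_eq[OF assms(1)] by auto

lemma powr_quarter_le:
  fixes q r :: real
  assumes "0 \<le> q" "0 < r" "q \<le> r ^ 4"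
  shows "q powr (1/4) \<le> r"
proof -
  have "q powr (1/4) \<le> (r ^ 4) powr (1/4)"
    using assms by (intro powr_mono2) auto
  also have "\<dots> = (r powr 4) powr (1/4)"
    using powr_realpow[OF assms(2), of 4] by simp
  also have "\<dots> = r"
    using assms(2) by (simp only: powr_powr) simp
  finally show ?thesis .
qed

theorem lemma5p6:
  fixes T :: "'a::{real_inner, complete_space} \<Rightarrow> 'a set"
    and a b :: real and z :: 'a
  assumes "maximal_monotone T"
    and "a \<ge> 0" and "b \<ge> 0"
    and "0 \<notin> T z"
  shows "(\<forall>\<rho>>0. psi a b T \<rho> z > 0)
    \<and> strict_mono_on {0<..} (\<lambda>\<rho>. psi a b T \<rho> z)
    \<and> continuous_on {0<..} (\<lambda>\<rho>. psi a b T \<rho> z)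
    \<and> ((\<lambda>\<rho>. psi a b T \<rho> z) \<longlongrightarrow> 0) (at_right 0)
    \<and> filterlim (\<lambda>\<rho>. psi a b T \<rho> z) at_top at_top
    \<and> (\<forall>\<theta>m \<theta>p. 0 < \<theta>m \<and> \<theta>m < \<theta>p \<longrightarrow>
         (\<exists>\<rho>m \<rho>p. 0 < \<rho>m \<and> \<rho>m \<le> \<rho>p
            \<and> {\<rho>. 0 < \<rho> \<and> \<theta>m \<le> psi a b T \<rho> z \<and> psi a b T \<rho> z \<le> \<theta>p} = {\<rho>m..\<rho>p}
            \<and> psi a b T \<rho>m z = \<theta>m \<and> psi a b T \<rho>p z = \<theta>p
            \<and> \<rho>p / \<rho>m \<ge> (\<theta>p / \<theta>m) powr (1/4)))"
proof (intro conjI allI impI)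
  note psi_continuous[OF assms(1)] psi_tendsto_zero[OF assms(1-3)] psi_at_top[OF assms]
  note levels = continuous_level_attained[OF this]
  fix \<theta>m \<theta>p :: real assume \<theta>: "0 < \<theta>m \<and> \<theta>m < \<theta>p"
  obtain \<rho>m \<rho>p where \<rho>: "0 < \<rho>m" "psi a b T \<rho>m z = \<theta>m" "0 < \<rho>p" "psi a b T \<rho>p z = \<theta>p"
    using levels[of \<theta>m] levels[of \<theta>p] \<theta> by auto
  then have interval: "\<rho>m \<le> \<rho>p \<and> {\<rho>. 0 < \<rho> \<and> \<theta>m \<le> psi a b T \<rho> z \<and> psi a b T \<rho> z \<le> \<theta>p} = {\<rho>m..\<rho>p}"
    using strict_mono_on_level_set[OF psi_strict_mono[OF assms], of \<rho>m \<rho>p] \<theta> by auto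
  then have "\<theta>p * \<rho>m ^ 4 \<le> \<theta>m * \<rho>p ^ 4"
    using psi_ratio_le_pow4[OF assms(1-3) \<rho>(1), of \<rho>p z] \<rho> by simp
  then have "\<theta>p / \<theta>m \<le> (\<rho>p / \<rho>m) ^ 4"
    using \<theta> \<rho>(1) by (simp add: power_divide field_simps)
  then have "(\<theta>p / \<theta>m) powr (1/4) \<le> \<rho>p / \<rho>m"
    using \<theta> \<rho> by (intro powr_quarter_le) auto
  then show "\<exists>\<rho>m \<rho>p. 0 < \<rho>m \<and> \<rho>m \<le> \<rho>p
            \<and> {\<rho>. 0 < \<rho> \<and> \<theta>m \<le> psi a b T \<rho> z \<and> psi a b T \<rho> z \<le> \<theta>p} = {\<rho>m..\<rho>p}
            \<and> psi a b T \<rho>m z = \<theta>m \<and> psi a b T \<rho>p z = \<theta>p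
            \<and> \<rho>p / \<rho>m \<ge> (\<theta>p / \<theta>m) powr (1/4)"
    using \<rho> interval by blast
qed (use psi_pos[OF assms] psi_strict_mono[OF assms] psi_continuous[OF assms(1)]
      psi_tendsto_zero[OF assms(1-3)] psi_at_top[OF assms] in auto)

end
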